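(* Let $(\mathbf{M},\mathcal{B},\mu,f)$ be a measure preserving system and $\varphi:\mathbf{M}\to\mathbb{R}\cup\{\pm\infty\}$ a continuous function. Let $X_j=\varphi\circ f^j$. Let $(u_n)$ be a non-decreasing sequence of real numbers and $(w_n)$ a non-decreasing sequence of integers such that $w_n\,\mu(X_0>u_n)\to\tau$ as $n\to\infty$ for some real number $\tau>0$. Put $U_n=\{X_0>u_n\}$. Then the following statements are equivalent: (1) there exists a probability distribution $m$ on $\mathbb{N}_0$ such that $\mu(\xi^{w_n}_{u_n}=k)\to m(\{k\})$ as $n\to\infty$ for every $k\in\mathbb{N}_0$; (2) there exists a probability distribution $m$ on $\mathbb{N}_0$ such that $\mu\big(\zeta^{\tau/\mu(U_n)}_{U_n}=k\big)\to m(\{k\})$ as $n\to\infty$ for every $k\in\mathbb{N}_0$.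
   Context: Here $\mathbf{M}$ is a compact Riemannian manifold, $f$ a differentiable map, $\mathcal B$ the Borel $\sigma$-algebra and $\mu$ an $f$-invariant probability measure. The rare event process is $\xi^N_{u_n}=\sum_{k=0}^{N-1}\mathbb{I}_{\{X_k>u_n\}}$, and for a set $U$ and $N>0$ the entry count is $\zeta^N_U=\sum_{0\le k<N}\mathbb{I}_U\circ f^k$ (for non-integer $N$ the sum runs over integers $0\le k<N$). $\mathbb I$ denotes the indicator function. *)

theory Defs
  imports "HOL-Probability.Probability"
begin

definition rare_event_process :: "('a \<Rightarrow> 'a) \<Rightarrow> ('a \<Rightarrow> ereal) \<Rightarrow> real \<Rightarrow> int \<Rightarrow> 'a \<Rightarrow> nat" where
  "rare_event_process f \<phi> u N x =
     (\<Sum>k\<in>{k::nat. int k < N}. indicator {y. \<phi> y > ereal u} ((f ^^ k) x))"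

definition entry_count :: "('a \<Rightarrow> 'a) \<Rightarrow> 'a set \<Rightarrow> real \<Rightarrow> 'a \<Rightarrow> nat" where
  "entry_count f U N x = (\<Sum>k\<in>{k::nat. real k < N}. indicator U ((f ^^ k) x))"

end

theory Submission
  imports Defs
begin

text \<open>Both counts are numbers of visits to \<open>U\<^sub>n\<close> along an initial orbit segment, of
  lengths \<open>w\<^sub>n\<close> and \<open>\<lceil>\<tau> / \<mu>(U\<^sub>n)\<rceil>\<close>. They can only differ on the union of the
  preimages \<open>f\<^sup>-\<^sup>j U\<^sub>n\<close> for \<open>j\<close> between the two lengths, which by invariance of \<open>\<mu>\<close> has
  measure at most \<open>|w\<^sub>n - \<lceil>\<tau> / \<mu>(U\<^sub>n)\<rceil>| \<mu>(U\<^sub>n)\<close>. This error tends to 0: directly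
  when \<open>\<mu>(U\<^sub>n) \<rightarrow> 0\<close>, and otherwise because \<open>w\<^sub>n\<close> then converges to an integer and
  eventually dominates \<open>\<tau> / \<mu>(U\<^sub>n)\<close>. So each level set of one count has the same limiting
  probability as the corresponding level set of the other.\<close>

definition visits :: "('a \<Rightarrow> 'a) \<Rightarrow> 'a set \<Rightarrow> nat \<Rightarrow> 'a \<Rightarrow> nat" where
  "visits f U n x = (\<Sum>k<n. indicator U ((f ^^ k) x))"

lemma rare_event_process_eq_visits:
  "rare_event_process f \<phi> u N = visits f {y. ereal u < \<phi> y} (nat N)"
proof -
  have "{k. int k < N} = {..<nat N}" by auto
  then show ?thesis unfolding rare_event_process_def visits_def by auto
qed

lemma entry_count_eq_visits: "entry_count f U t = visits f U (nat \<lceil>t\<rceil>)"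
proof -
  have "{k. real k < t} = {..<nat \<lceil>t\<rceil>}" by (auto simp: zless_nat_eq_int_zless less_ceiling_iff)
  then show ?thesis unfolding entry_count_def visits_def by auto
qed

lemma visits_eq_if_no_visit_between:
  assumes "\<And>j. j \<in> {min m n..<max m n} \<Longrightarrow> (f ^^ j) x \<notin> U"
  shows "visits f U m x = visits f U n x"
proof -
  have split: "visits f U q x = visits f U p x + (\<Sum>k\<in>{p..<q}. indicator U ((f ^^ k) x))"
    if "p \<le> q" for p q
    unfolding visits_def lessThan_atLeast0 using that by (simp add: sum.atLeastLessThan_concat)
  show ?thesis
    using split[of m n] split[of n m] assms by (cases "m \<le> n") (auto simp: min_def max_def)
qed

lemma measurable_funpow: "f \<in> M \<rightarrow>\<^sub>M M \<Longrightarrow> f ^^ n \<in> M \<rightarrow>\<^sub>M M"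
  by (induction n) (auto intro: measurable_comp)

lemma measure_funpow_vimage:
  assumes f: "f \<in> M \<rightarrow>\<^sub>M M" "distr M M f = M" and A: "A \<in> sets M"
  shows "measure M ((f ^^ n) -` A \<inter> space M) = measure M A"
proof (induction n)
  case 0
  then show ?case using sets.sets_into_space[OF A] by (simp add: Int_absorb2)
next
  case (Suc n)
  have "(f ^^ n) -` A \<inter> space M \<in> sets M"
    using measurable_funpow[OF f(1)] A by (rule measurable_sets)
  have "(f ^^ Suc n) -` A \<inter> space M = f -` ((f ^^ n) -` A \<inter> space M) \<inter> space M"
    using measurable_space[OF f(1)] by (auto simp del: funpow.simps simp: funpow_Suc_right)
  also have "measure M \<dots> = measure (distr M M f) ((f ^^ n) -` A \<inter> space M)"
    using measure_distr[OF f(1) \<open>(f ^^ n) -` A \<inter> space M \<in> sets M\<close>] by simp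
  also have "\<dots> = measure M A"
    using Suc f(2) by simp
  finally show ?case .
qed

lemma measurable_visits:
  assumes "f \<in> M \<rightarrow>\<^sub>M M" "U \<in> sets M"
  shows "visits f U n \<in> M \<rightarrow>\<^sub>M count_space UNIV"
proof -
  have "(\<lambda>x. indicator U ((f ^^ k) x) :: nat) \<in> M \<rightarrow>\<^sub>M count_space UNIV" for k
    using measurable_funpow[OF assms(1)] assms(2) unfolding indicator_def by measurable
  then show ?thesis unfolding visits_def by measurable
qed

lemma (in finite_measure) measure_diff_le_if_eq_outside:
  assumes "A \<in> sets M" "B \<in> sets M" "E \<in> sets M" "A - E \<subseteq> B" "B - E \<subseteq> A"
  shows "\<bar>measure M A - measure M B\<bar> \<le> measure M E"
proof -
  have "measure M A \<le> measure M (B \<union> E)" "measure M B \<le> measure M (A \<union> E)"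
    using assms by (blast intro: finite_measure_mono)+
  moreover have "measure M (B \<union> E) \<le> measure M B + measure M E"
      "measure M (A \<union> E) \<le> measure M A + measure M E"
    using assms by (auto intro!: measure_Un_le)
  ultimately show ?thesis by linarith
qed

lemma (in finite_measure) measure_visits_diff_le:
  assumes f: "f \<in> M \<rightarrow>\<^sub>M M" "distr M M f = M" and U: "U \<in> sets M"
  shows "\<bar>measure M {x\<in>space M. visits f U m x = k} - measure M {x\<in>space M. visits f U n x = k}\<bar>
    \<le> \<bar>real m - real n\<bar> * measure M U"
proof -
  define E where "E = (\<Union>j\<in>{min m n..<max m n}. (f ^^ j) -` U \<inter> space M)"
  have vimage_sets: "(f ^^ j) -` U \<inter> space M \<in> sets M" for j
    using measurable_funpow[OF f(1)] U by (rule measurable_sets)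
  then have "E \<in> sets M" unfolding E_def by (intro sets.finite_UN) auto
  have "measure M E \<le> (\<Sum>j\<in>{min m n..<max m n}. measure M ((f ^^ j) -` U \<inter> space M))"
    unfolding E_def using vimage_sets by (intro measure_UNION_le) auto
  also have "\<dots> = \<bar>real m - real n\<bar> * measure M U"
    by (simp add: measure_funpow_vimage[OF f U] min_def max_def of_nat_diff)
  finally have E_le: "measure M E \<le> \<bar>real m - real n\<bar> * measure M U" .
  have eq_outside: "visits f U m x = visits f U n x" if "x \<in> space M" "x \<notin> E" for x
    using that by (intro visits_eq_if_no_visit_between) (auto simp: E_def)
  have level_sets: "{x\<in>space M. visits f U j x = k} \<in> sets M" for j
    using measurable_visits[OF f(1) U] by measurable
  have "\<bar>measure M {x\<in>space M. visits f U m x = k} - measure M {x\<in>space M. visits f U n x = k}\<bar>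
      \<le> measure M E"
    using eq_outside by (intro measure_diff_le_if_eq_outside level_sets \<open>E \<in> sets M\<close>) auto
  with E_le show ?thesis by linarith
qed

lemma (in finite_measure) measure_rare_event_process_entry_count_diff_le:
  assumes f: "f \<in> M \<rightarrow>\<^sub>M M" "distr M M f = M" and U: "{y. ereal u < \<phi> y} \<in> sets M"
  shows "\<bar>measure M {x\<in>space M. rare_event_process f \<phi> u N x = k}
      - measure M {x\<in>space M. entry_count f {y. ereal u < \<phi> y} t x = k}\<bar>
    \<le> \<bar>real_of_int (N - \<lceil>t\<rceil>)\<bar> * measure M {y. ereal u < \<phi> y}"
proof -
  have "\<bar>measure M {x\<in>space M. rare_event_process f \<phi> u N x = k}
      - measure M {x\<in>space M. entry_count f {y. ereal u < \<phi> y} t x = k}\<bar>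
    \<le> \<bar>real (nat N) - real (nat \<lceil>t\<rceil>)\<bar> * measure M {y. ereal u < \<phi> y}"
    unfolding rare_event_process_eq_visits entry_count_eq_visits
    by (rule measure_visits_diff_le[OF f U])
  also have "\<dots> \<le> \<bar>real_of_int (N - \<lceil>t\<rceil>)\<bar> * measure M {y. ereal u < \<phi> y}"
    by (intro mult_right_mono) auto
  finally show ?thesis .
qed

lemma (in finite_measure) decseq_measure_exceedance:
  fixes \<phi> :: "'a \<Rightarrow> ereal" and u :: "nat \<Rightarrow> real"
  assumes "mono u" and sets: "\<And>n. {y. ereal (u n) < \<phi> y} \<in> sets M"
  shows "decseq (\<lambda>n. measure M {y. ereal (u n) < \<phi> y})"
proof (rule decseq_SucI)
  fix n
  have "ereal (u n) \<le> ereal (u (Suc n))" using \<open>mono u\<close> by (simp add: monoD)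
  then have "{y. ereal (u (Suc n)) < \<phi> y} \<subseteq> {y. ereal (u n) < \<phi> y}"
    using order_le_less_trans by blast
  then show "measure M {y. ereal (u (Suc n)) < \<phi> y} \<le> measure M {y. ereal (u n) < \<phi> y}"
    using sets by (rule finite_measure_mono)
qed

lemma Lim_transform_iff:
  fixes a b :: "'a \<Rightarrow> 'b::real_normed_vector" and e :: "'a \<Rightarrow> real"
  assumes "\<forall>\<^sub>F x in F. norm (a x - b x) \<le> e x" "(e \<longlongrightarrow> 0) F"
  shows "(a \<longlongrightarrow> l) F \<longleftrightarrow> (b \<longlongrightarrow> l) F"
proof -
  have ab: "((\<lambda>x. a x - b x) \<longlongrightarrow> 0) F" using assms by (rule Lim_null_comparison)
  then have ba: "((\<lambda>x. b x - a x) \<longlongrightarrow> 0) F" using tendsto_minus by fastforce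
  show ?thesis using Lim_transform[OF _ ab] Lim_transform[OF _ ba] by blast
qed

lemma eventually_eq_of_int_limit:
  fixes w :: "nat \<Rightarrow> int"
  assumes lim: "(\<lambda>n. real_of_int (w n)) \<longlonglongrightarrow> c"
  shows "\<exists>W. c = of_int W \<and> (\<forall>\<^sub>F n in sequentially. w n = W)"
proof -
  obtain N where N: "\<And>n. n \<ge> N \<Longrightarrow> dist (real_of_int (w n)) c < 1/2"
    using tendstoD[OF lim, of "1/2"] by (auto simp: eventually_sequentially)
  have "w n = w N" if "n \<ge> N" for n
  proof -
    have "dist (real_of_int (w n)) (real_of_int (w N)) < 1"
      using dist_triangle_half_l[OF N[OF that] N[OF order_refl]] .
    then show ?thesis by (simp add: dist_real_def flip: of_int_diff)
  qed
  then have ev: "\<forall>\<^sub>F n in sequentially. w n = w N"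
    by (rule eventually_sequentiallyI)
  then have "(\<lambda>n. real_of_int (w n)) \<longlonglongrightarrow> w N"
    by (intro tendsto_eventually) (auto elim: eventually_mono)
  with lim have "c = w N" by (rule LIMSEQ_unique)
  with ev show ?thesis by blast
qed

lemma ceiling_mismatch_le:
  fixes p t :: real and w :: int
  assumes "0 \<le> p"
  shows "\<bar>real_of_int (w - \<lceil>t / p\<rceil>)\<bar> * p \<le> \<bar>real_of_int w * p - t\<bar> + p"
proof (cases "p = 0")
  case False
  then have "p > 0" using assms by simp
  have "\<bar>real_of_int (w - \<lceil>t / p\<rceil>)\<bar> \<le> \<bar>real_of_int w - t / p\<bar> + 1"
    using ceiling_correct[of "t / p"] by linarith
  then have "\<bar>real_of_int (w - \<lceil>t / p\<rceil>)\<bar> * p \<le> (\<bar>real_of_int w - t / p\<bar> + 1) * p"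
    using \<open>p > 0\<close> by (intro mult_right_mono) auto
  also have "\<dots> = \<bar>(real_of_int w - t / p) * p\<bar> + p"
    using \<open>p > 0\<close> by (simp add: distrib_right abs_mult)
  also have "(real_of_int w - t / p) * p = real_of_int w * p - t"
    using \<open>p > 0\<close> by (simp add: left_diff_distrib)
  finally show ?thesis .
qed simp

lemma ceiling_mismatch_le_if_ceiling_le:
  fixes p t :: real and w :: int
  assumes "0 < p" "t / p \<le> real_of_int w"
  shows "\<bar>real_of_int (w - \<lceil>t / p\<rceil>)\<bar> * p \<le> real_of_int w * p - t"
proof -
  have "\<lceil>t / p\<rceil> \<le> w" using assms(2) by (simp add: ceiling_le_iff)
  then have "\<bar>real_of_int (w - \<lceil>t / p\<rceil>)\<bar> * p = (real_of_int w - \<lceil>t / p\<rceil>) * p" by simp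
  also have "\<dots> \<le> (real_of_int w - t / p) * p"
    using assms(1) by (intro mult_right_mono) auto
  also have "\<dots> = real_of_int w * p - t"
    using assms(1) by (simp add: left_diff_distrib)
  finally show ?thesis .
qed

lemma ceiling_mismatch_tendsto_zero:
  fixes P :: "nat \<Rightarrow> real" and w :: "nat \<Rightarrow> int"
  assumes P: "decseq P" "\<And>n. 0 \<le> P n" and "0 \<le> \<tau>"
    and lim: "(\<lambda>n. real_of_int (w n) * P n) \<longlonglongrightarrow> \<tau>"
  shows "(\<lambda>n. \<bar>real_of_int (w n - \<lceil>\<tau> / P n\<rceil>)\<bar> * P n) \<longlonglongrightarrow> 0"
proof -
  have "\<forall>n. 0 \<le> P n" using P(2) ..
  then obtain L where PL: "P \<longlonglongrightarrow> L" and L_le: "\<forall>n. L \<le> P n"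
    by (rule decseq_convergent[OF P(1)])
  have err_lim: "(\<lambda>n. \<bar>real_of_int (w n) * P n - \<tau>\<bar>) \<longlonglongrightarrow> 0"
    using tendsto_rabs_zero[OF LIM_zero[OF lim]] .
  have nonneg: "\<forall>\<^sub>F n in sequentially. 0 \<le> \<bar>real_of_int (w n - \<lceil>\<tau> / P n\<rceil>)\<bar> * P n"
    using P(2) by (intro always_eventually allI mult_nonneg_nonneg abs_ge_zero)
  have "0 \<le> L" using LIMSEQ_le_const[OF PL] P(2) by blast
  then consider "L = 0" | "0 < L" by linarith
  then show ?thesis
  proof cases
    case 1
    have "(\<lambda>n. \<bar>real_of_int (w n) * P n - \<tau>\<bar> + P n) \<longlonglongrightarrow> 0 + 0"
      using err_lim PL unfolding 1 by (intro tendsto_add)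
    moreover have "\<forall>\<^sub>F n in sequentially.
        \<bar>real_of_int (w n - \<lceil>\<tau> / P n\<rceil>)\<bar> * P n \<le> \<bar>real_of_int (w n) * P n - \<tau>\<bar> + P n"
      using P(2) by (intro always_eventually allI ceiling_mismatch_le)
    ultimately show ?thesis
      using tendsto_sandwich[OF nonneg _ tendsto_const] by simp
  next
    case 2
    have P_pos: "0 < P n" for n using L_le 2 by (metis order_less_le_trans)
    have "(\<lambda>n. real_of_int (w n) * P n / P n) \<longlonglongrightarrow> \<tau> / L"
      using lim PL 2 by (intro tendsto_divide) auto
    then have "(\<lambda>n. real_of_int (w n)) \<longlonglongrightarrow> \<tau> / L"
      using P_pos by (simp add: less_imp_neq[symmetric])
    then obtain W where W: "\<tau> / L = of_int W" and ev_W: "\<forall>\<^sub>F n in sequentially. w n = W"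
      using eventually_eq_of_int_limit by blast
    have "\<tau> / P n \<le> \<tau> / L" for n
      using L_le 2 P_pos[of n] \<open>0 \<le> \<tau>\<close> by (intro divide_left_mono) simp_all
    with W have "\<forall>\<^sub>F n in sequentially. \<tau> / P n \<le> real_of_int (w n)"
      by (intro eventually_mono[OF ev_W]) simp
    then have "\<forall>\<^sub>F n in sequentially.
        \<bar>real_of_int (w n - \<lceil>\<tau> / P n\<rceil>)\<bar> * P n \<le> real_of_int (w n) * P n - \<tau>"
      by (rule eventually_mono) (rule ceiling_mismatch_le_if_ceiling_le[OF P_pos])
    then have "\<forall>\<^sub>F n in sequentially.
        \<bar>real_of_int (w n - \<lceil>\<tau> / P n\<rceil>)\<bar> * P n \<le> \<bar>real_of_int (w n) * P n - \<tau>\<bar>"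
      by (rule eventually_mono) linarith
    then show ?thesis
      by (rule tendsto_sandwich[OF nonneg _ tendsto_const err_lim])
  qed
qed

theorem theoremC:
  fixes M :: "'a::metric_space measure"
    and f :: "'a \<Rightarrow> 'a"
    and \<phi> :: "'a \<Rightarrow> ereal"
    and u :: "nat \<Rightarrow> real"
    and w :: "nat \<Rightarrow> int"
    and \<tau> :: real
  assumes compact_space: "compact (UNIV :: 'a set)"
    and borel_sets: "sets M = sets borel"
    and prob: "prob_space M"
    and f_cont: "continuous_on UNIV f"
    and f_meas: "f \<in> measurable M M"
    and f_pres: "distr M M f = M"
    and phi_cont: "continuous_on UNIV \<phi>"
    and u_mono: "mono u"
    and w_mono: "mono w"
    and tau_pos: "\<tau> > 0"
    and lim: "(\<lambda>n. real_of_int (w n) * measure M {x. \<phi> x > ereal (u n)}) \<longlonglongrightarrow> \<tau>"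
  shows "(\<exists>m :: nat pmf. \<forall>k. (\<lambda>n. measure M {x. rare_event_process f \<phi> (u n) (w n) x = k})
              \<longlonglongrightarrow> pmf m k)
     \<longleftrightarrow> (\<exists>m :: nat pmf. \<forall>k. (\<lambda>n. measure M {x. entry_count f {y. \<phi> y > ereal (u n)}
                  (\<tau> / measure M {y. \<phi> y > ereal (u n)}) x = k}) \<longlonglongrightarrow> pmf m k)"
proof -
  interpret prob_space M by (rule prob)
  have space_M: "space M = UNIV" using sets_eq_imp_space_eq[OF borel_sets] by simp
  define U where "U n = {y. ereal (u n) < \<phi> y}" for n
  define P where "P n = measure M (U n)" for n
  have U_sets: "U n \<in> sets M" for n
  proof -
    have "open (U n)" unfolding U_def
      by (intro open_Collect_less continuous_on_const phi_cont)
    then show ?thesis using borel_sets by simp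
  qed
  have "decseq P"
    unfolding P_def U_def using u_mono U_sets[unfolded U_def] by (rule decseq_measure_exceedance)
  have close: "\<bar>measure M {x. rare_event_process f \<phi> (u n) (w n) x = k}
      - measure M {x. entry_count f (U n) (\<tau> / P n) x = k}\<bar>
    \<le> \<bar>real_of_int (w n - \<lceil>\<tau> / P n\<rceil>)\<bar> * P n" for n k
    using measure_rare_event_process_entry_count_diff_le[OF f_meas f_pres U_sets[unfolded U_def]]
    by (simp add: space_M U_def P_def)
  have mismatch_lim: "(\<lambda>n. \<bar>real_of_int (w n - \<lceil>\<tau> / P n\<rceil>)\<bar> * P n) \<longlonglongrightarrow> 0"
  proof (rule ceiling_mismatch_tendsto_zero[OF \<open>decseq P\<close>])
    show "(\<lambda>n. real_of_int (w n) * P n) \<longlonglongrightarrow> \<tau>" using lim unfolding P_def U_def .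
  qed (use tau_pos in \<open>auto simp: P_def\<close>)
  have "(\<lambda>n. measure M {x. rare_event_process f \<phi> (u n) (w n) x = k}) \<longlonglongrightarrow> l
      \<longleftrightarrow> (\<lambda>n. measure M {x. entry_count f (U n) (\<tau> / P n) x = k}) \<longlonglongrightarrow> l" for k l
    by (rule Lim_transform_iff[OF always_eventually mismatch_lim])
      (intro allI, simp only: real_norm_def close)
  moreover have "{y. \<phi> y > ereal (u n)} = U n" "measure M (U n) = P n" for n
    unfolding U_def P_def by simp_all
  ultimately show ?thesis by (simp only:)
qed

end
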